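(* Consider the linear model $\eta(x,\theta)=f^\top(x)\theta$ with $\Theta=\mathbb{R}^p$, and let $\theta^{(0)}\in\mathbb{R}^p$ be arbitrary. Define, for $\xi\in\Xi$, $$\phi_{eD}(\xi)=\min_{(\theta^{(1)},\dots,\theta^{(p)})\in\mathcal{V}_{\theta^{(0)}}}\frac{\frac1p\sum_{i=1}^p\|\eta(\cdot,\theta^{(i)})-\eta(\cdot,\theta^{(0)})\|_\xi^2}{\left[\prod_{j=1}^p\|\theta^{(j)}-\theta^{(0)}\|^2\right]^{1/p}},$$ $$\phi_{eA}(\xi)=\min_{(\theta^{(1)},\dots,\theta^{(p)})\in\mathcal{V}_{\theta^{(0)}}}\frac{\sum_{i=1}^p\|\theta^{(i)}-\theta^{(0)}\|^2\,\|\eta(\cdot,\theta^{(i)})-\eta(\cdot,\theta^{(0)})\|_\xi^2}{\left[\sum_{j=1}^p\|\theta^{(j)}-\theta^{(0)}\|^2\right]^2},$$ $$\phi_{eE_k}(\xi)=\min_{(\theta^{(1)},\dots,\theta^{(p)})\in\mathcal{V}_{\theta^{(0)}}}\sum_{i=1}^k\frac{\|\eta(\cdot,\theta^{(i)})-\eta(\cdot,\theta^{(0)})\|_\xi^2}{\|\theta^{(i)}-\theta^{(0)}\|^2}.$$ Then these minima are attained, $\phi_{eD}(\xi)=\phi_D(\xi)$ and $\phi_{eA}(\xi)=\phi_A(\xi)$ for every $\xi\in\Xi^+$, and $\phi_{eE_k}(\xi)=\phi_{E_k}(\xi)$ for every $\xi\in\Xi$ and $k\in\{1,\dots,p\}$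.
   Context: $\mathcal{X}$ is a finite set, $f:\mathcal{X}\to\mathbb{R}^p$, $\Xi$ the set of probability measures on $\mathcal{X}$, $M(\xi)=\sum_x f(x)f^\top(x)\xi(x)$, $\Xi^+=\{\mu\in\Xi: M(\mu)\text{ nonsingular}\}$. $\phi_D(\xi)=\det^{1/p}M(\xi)$, $\phi_A(\xi)=1/\mathrm{tr}M^{-1}(\xi)$, $\phi_{E_k}(\xi)$ = sum of the $k$ smallest eigenvalues (with multiplicity) of $M(\xi)$. $\mathcal{V}_{\theta^{(0)}}$ is the set of $p$-tuples $(\theta^{(1)},\dots,\theta^{(p)})$ of vectors in $\Theta$ with $\theta^{(i)}-\theta^{(0)}\neq0$ for all $i$ and $(\theta^{(i)}-\theta^{(0)})^\top(\theta^{(j)}-\theta^{(0)})=0$ for $i\ne j$. $\|\cdot\|$ is the Euclidean norm and $\|\eta(\cdot,\theta)-\eta(\cdot,\theta')\|_\xi^2=\sum_{x\in\mathcal{X}}[\eta(x,\theta)-\eta(x,\theta')]^2\xi(x)$. *)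

theory Defs
  imports "HOL-Analysis.Analysis" "HOL-Computational_Algebra.Polynomial"
begin

text \<open>A design is a probability measure on the finite design space, i.e. on the
  finite type 'x: a nonnegative weight function summing to one.\<close>
definition design :: "('x::finite \<Rightarrow> real) \<Rightarrow> bool" where
  "design \<xi> \<longleftrightarrow> (\<forall>x. 0 \<le> \<xi> x) \<and> sum \<xi> UNIV = 1"

definition outer :: "real^'p \<Rightarrow> real^'p \<Rightarrow> real^'p^'p" where
  "outer a b = (\<chi> i j. a$i * b$j)"

definition info_matrix :: "('x::finite \<Rightarrow> real^'p) \<Rightarrow> ('x \<Rightarrow> real) \<Rightarrow> real^'p^'p" where
  "info_matrix f \<xi> = (\<Sum>x\<in>UNIV. \<xi> x *\<^sub>R outer (f x) (f x))"

definition design_plus :: "('x::finite \<Rightarrow> real^'p) \<Rightarrow> ('x \<Rightarrow> real) \<Rightarrow> bool" where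
  "design_plus f \<xi> \<longleftrightarrow> design \<xi> \<and> invertible (info_matrix f \<xi>)"

definition phi_D :: "('x::finite \<Rightarrow> real^'p) \<Rightarrow> ('x \<Rightarrow> real) \<Rightarrow> real" where
  "phi_D f \<xi> = det (info_matrix f \<xi>) powr (1 / real CARD('p))"

definition phi_A :: "('x::finite \<Rightarrow> real^'p) \<Rightarrow> ('x \<Rightarrow> real) \<Rightarrow> real" where
  "phi_A f \<xi> = 1 / trace (matrix_inv (info_matrix f \<xi>))"

text \<open>Characteristic polynomial det(t I - A); its roots counted with multiplicity are
  the eigenvalues of A counted with multiplicity.\<close>
definition charpoly :: "real^'p^'p \<Rightarrow> real poly" where
  "charpoly A = det (\<chi> i j. (if i = j then [:0, 1:] else 0) - [: A$i$j :])"

definition eigenvalues_sorted :: "real^'p^'p \<Rightarrow> real list" where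
  "eigenvalues_sorted A = sorted_list_of_multiset (proots (charpoly A))"

definition phi_E :: "nat \<Rightarrow> ('x::finite \<Rightarrow> real^'p) \<Rightarrow> ('x \<Rightarrow> real) \<Rightarrow> real" where
  "phi_E k f \<xi> = sum_list (take k (eigenvalues_sorted (info_matrix f \<xi>)))"

definition xi_dist2 :: "('x::finite \<Rightarrow> 't \<Rightarrow> real) \<Rightarrow> ('x \<Rightarrow> real) \<Rightarrow> 't \<Rightarrow> 't \<Rightarrow> real" where
  "xi_dist2 \<eta> \<xi> th th' = (\<Sum>x\<in>UNIV. (\<eta> x th - \<eta> x th')\<^sup>2 * \<xi> x)"

definition lin_model :: "('x \<Rightarrow> real^'p) \<Rightarrow> 'x \<Rightarrow> real^'p \<Rightarrow> real" where
  "lin_model f x th = f x \<bullet> th"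

text \<open>V_{theta0} with Theta = R^p: p-tuples (lists of length p) of vectors theta^(i),
  theta^(i) - theta0 nonzero and pairwise orthogonal. Entry i of the list (0-based)
  is theta^(i+1).\<close>
definition V_set :: "real^'p \<Rightarrow> (real^'p) list set" where
  "V_set th0 = {ts. length ts = CARD('p) \<and> (\<forall>i<CARD('p). ts!i - th0 \<noteq> 0) \<and>
      (\<forall>i<CARD('p). \<forall>j<CARD('p). i \<noteq> j \<longrightarrow> (ts!i - th0) \<bullet> (ts!j - th0) = 0)}"

definition obj_eD :: "('x::finite \<Rightarrow> real^'p \<Rightarrow> real) \<Rightarrow> ('x \<Rightarrow> real) \<Rightarrow> real^'p \<Rightarrow> (real^'p) list \<Rightarrow> real" where
  "obj_eD \<eta> \<xi> th0 ts =
     ((1 / real CARD('p)) * (\<Sum>i<CARD('p). xi_dist2 \<eta> \<xi> (ts!i) th0)) /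
     ((\<Prod>j<CARD('p). (norm (ts!j - th0))\<^sup>2) powr (1 / real CARD('p)))"

definition obj_eA :: "('x::finite \<Rightarrow> real^'p \<Rightarrow> real) \<Rightarrow> ('x \<Rightarrow> real) \<Rightarrow> real^'p \<Rightarrow> (real^'p) list \<Rightarrow> real" where
  "obj_eA \<eta> \<xi> th0 ts =
     (\<Sum>i<CARD('p). (norm (ts!i - th0))\<^sup>2 * xi_dist2 \<eta> \<xi> (ts!i) th0) /
     (\<Sum>j<CARD('p). (norm (ts!j - th0))\<^sup>2)\<^sup>2"

definition obj_eE :: "nat \<Rightarrow> ('x::finite \<Rightarrow> real^'p \<Rightarrow> real) \<Rightarrow> ('x \<Rightarrow> real) \<Rightarrow> real^'p \<Rightarrow> (real^'p) list \<Rightarrow> real" where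
  "obj_eE k \<eta> \<xi> th0 ts =
     (\<Sum>i<k. xi_dist2 \<eta> \<xi> (ts!i) th0 / (norm (ts!i - th0))\<^sup>2)"

definition phi_eD where "phi_eD \<eta> \<xi> th0 = Inf (obj_eD \<eta> \<xi> th0 ` V_set th0)"
definition phi_eA where "phi_eA \<eta> \<xi> th0 = Inf (obj_eA \<eta> \<xi> th0 ` V_set th0)"
definition phi_eE where "phi_eE k \<eta> \<xi> th0 = Inf (obj_eE k \<eta> \<xi> th0 ` V_set th0)"

end

theory Submission
  imports Defs
begin

text \<open>For the linear model the squared response distance is a quadratic form in the parameter
  difference: \<open>xi_dist2 (lin_model f) \<xi> \<theta> \<theta>\<^sub>0 = d \<bullet> (M *v d)\<close> with \<open>d = \<theta> - \<theta>\<^sub>0\<close> and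
  \<open>M = info_matrix f \<xi>\<close>. Fix an orthonormal eigenbasis \<open>u j\<close> of \<open>M\<close> with increasing eigenvalues
  \<open>lam j\<close>, obtained by successively minimising the Rayleigh quotient. For an orthogonal tuple of
  nonzero differences \<open>d i\<close> with unit directions \<open>v i\<close> one has
  \<open>d i \<bullet> (M *v d i) = \<parallel>d i\<parallel>\<^sup>2 * (\<Sum>j. w i j * lam j)\<close> with the doubly stochastic weights
  \<open>w i j = (v i \<bullet> u j)\<^sup>2\<close>. Each extended criterion is thus bounded below by the classical one:
  for D by Jensen's inequality for \<open>ln\<close> and AM-GM, for A by Jensen's inequality for \<open>1/x\<close> and
  Cauchy-Schwarz, and for \<open>E\<^sub>k\<close> because the partial column sums \<open>\<Sum>i<k. w i j\<close> are weights in
  \<open>[0,1]\<close> of total mass \<open>k\<close>. Tuples along the eigenvectors, scaled by \<open>1 / sqrt (lam j)\<close> for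
  D and A, attain these bounds.\<close>

section \<open>Doubly stochastic weights\<close>

definition doubly_stochastic :: "nat \<Rightarrow> (nat \<Rightarrow> nat \<Rightarrow> real) \<Rightarrow> bool" where
  "doubly_stochastic n w \<longleftrightarrow> (\<forall>i<n. \<forall>j<n. 0 \<le> w i j) \<and>
     (\<forall>i<n. (\<Sum>j<n. w i j) = 1) \<and> (\<forall>j<n. (\<Sum>i<n. w i j) = 1)"

lemma doubly_stochastic_mix_pos:
  assumes "doubly_stochastic n w" "i < n" "\<And>j. j < n \<Longrightarrow> 0 < lam j"
  shows "0 < (\<Sum>j<n. w i j * lam j)"
  using convex_sum[of "{..<n}" "{0<..}" "w i" lam] assms
  by (auto simp: doubly_stochastic_def)

lemma prod_le_prod_doubly_stochastic_mix:
  assumes w: "doubly_stochastic n w" and lam: "\<And>j. j < n \<Longrightarrow> 0 < lam j"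
  shows "(\<Prod>j<n. lam j) \<le> (\<Prod>i<n. \<Sum>j<n. w i j * lam j)"
proof -
  define m where "m i = (\<Sum>j<n. w i j * lam j)" for i
  have m_pos: "0 < m i" if "i < n" for i
    using doubly_stochastic_mix_pos[OF w that lam] by (simp add: m_def)
  have jensen: "(\<Sum>j<n. w i j * ln (lam j)) \<le> ln (m i)" if i: "i < n" for i
    using concave_on_sum[OF _ _ ln_concave, of "{..<n}" "w i" lam] w lam i
    by (auto simp: doubly_stochastic_def m_def)
  have "(\<Sum>j<n. ln (lam j)) = (\<Sum>j<n. (\<Sum>i<n. w i j) * ln (lam j))"
    using w by (simp add: doubly_stochastic_def)
  also have "\<dots> = (\<Sum>i<n. \<Sum>j<n. w i j * ln (lam j))"
    unfolding sum_distrib_right by (rule sum.swap)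
  also have "\<dots> \<le> (\<Sum>i<n. ln (m i))"
    by (intro sum_mono jensen) simp
  also have "(\<Sum>i<n. ln (m i)) = ln (\<Prod>i<n. m i)"
    by (intro ln_prod[symmetric]) (auto dest!: m_pos)
  finally have "ln (\<Prod>j<n. lam j) \<le> ln (\<Prod>i<n. m i)"
    by (subst ln_prod) (auto dest!: lam)
  moreover have "0 < (\<Prod>j<n. lam j)"
    by (auto intro!: prod_pos dest!: lam)
  moreover have "0 < (\<Prod>i<n. m i)"
    by (auto intro!: prod_pos dest!: m_pos)
  ultimately show ?thesis
    by (simp add: m_def)
qed

lemma doubly_stochastic_D_bound:
  assumes w: "doubly_stochastic n w" and n: "0 < n"
    and a: "\<And>i. i < n \<Longrightarrow> 0 < a i" and lam: "\<And>j. j < n \<Longrightarrow> 0 < lam j"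
  shows "(\<Prod>j<n. lam j) powr (1 / n) \<le>
     ((1 / n) * (\<Sum>i<n. a i * (\<Sum>j<n. w i j * lam j))) / (\<Prod>i<n. a i) powr (1 / n)"
proof -
  define m where "m i = (\<Sum>j<n. w i j * lam j)" for i
  define G where "G = (\<Prod>i<n. a i) powr (1 / n)"
  have m_pos: "0 < m i" if "i < n" for i
    using doubly_stochastic_mix_pos[OF w that lam] by (simp add: m_def)
  have "0 < (\<Prod>i<n. a i)"
    by (intro prod_pos) (auto dest!: a)
  hence G_pos: "0 < G"
    unfolding G_def by (metis powr_gt_zero order_less_irrefl)
  have "G * (\<Prod>j<n. lam j) powr (1 / n) \<le> G * (\<Prod>i<n. m i) powr (1 / n)"
  proof (intro mult_left_mono powr_mono2)
    show "(\<Prod>j<n. lam j) \<le> (\<Prod>i<n. m i)"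
      unfolding m_def by (rule prod_le_prod_doubly_stochastic_mix[OF w lam])
    show "0 \<le> (\<Prod>j<n. lam j)"
      using lam by (intro prod_nonneg) (simp add: less_imp_le)
  qed (use G_pos in simp_all)
  also have "\<dots> = (\<Prod>i<n. a i * m i) powr (1 / n)"
    using a m_pos by (simp add: G_def prod.distrib powr_mult prod_nonneg less_imp_le)
  also have "\<dots> \<le> (\<Sum>i<n. a i * m i / n)"
    using arith_geom_mean[of "{..<n}" "\<lambda>i. a i * m i"] a m_pos n by (simp add: less_imp_le lessThan_empty_iff)
  also have "\<dots> = (1 / n) * (\<Sum>i<n. a i * m i)"
    by (simp add: sum_distrib_left sum_divide_distrib)
  finally have "G * (\<Prod>j<n. lam j) powr (1 / n) \<le> (1 / n) * (\<Sum>i<n. a i * m i)" .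
  with G_pos n show ?thesis
    by (simp add: m_def G_def[symmetric] field_simps)
qed

lemma doubly_stochastic_A_bound:
  assumes w: "doubly_stochastic n w" and n: "0 < n"
    and a: "\<And>i. i < n \<Longrightarrow> 0 < a i" and lam: "\<And>j. j < n \<Longrightarrow> 0 < lam j"
  shows "1 / (\<Sum>j<n. 1 / lam j) \<le>
     (\<Sum>i<n. a i * (a i * (\<Sum>j<n. w i j * lam j))) / (\<Sum>i<n. a i)\<^sup>2"
proof -
  define m where "m i = (\<Sum>j<n. w i j * lam j)" for i
  have m_pos: "0 < m i" if "i < n" for i
    using doubly_stochastic_mix_pos[OF w that lam] by (simp add: m_def)
  have jensen: "1 / m i \<le> (\<Sum>j<n. w i j * (1 / lam j))" if i: "i < n" for i
    using convex_on_sum[OF _ _ convex_on_inverse[of "{0<..}"], of "{..<n}" "w i" lam] w lam i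
    by (auto simp: doubly_stochastic_def m_def inverse_eq_divide)
  define L where "L = (\<Sum>j<n. 1 / lam j)"
  have L_pos: "0 < L" using lam n unfolding L_def by (intro sum_pos) auto
  have "(\<Sum>i<n. 1 / m i) \<le> (\<Sum>i<n. \<Sum>j<n. w i j * (1 / lam j))"
    by (intro sum_mono jensen) simp
  also have "\<dots> = L"
    using w by (subst sum.swap) (simp add: L_def doubly_stochastic_def flip: sum_divide_distrib)
  finally have inv_mix: "(\<Sum>i<n. 1 / m i) \<le> L" .
  have "a i = (a i * sqrt (m i)) * (1 / sqrt (m i))" if "i < n" for i
    using m_pos[OF that] by simp
  hence "(\<Sum>i<n. a i)\<^sup>2 = (\<Sum>i<n. (a i * sqrt (m i)) * (1 / sqrt (m i)))\<^sup>2"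
    by (intro arg_cong[where f = "\<lambda>s. s\<^sup>2"] sum.cong) auto
  also have "\<dots> \<le> (\<Sum>i<n. (a i * sqrt (m i))\<^sup>2) * (\<Sum>i<n. (1 / sqrt (m i))\<^sup>2)"
    by (rule Cauchy_Schwarz_ineq_sum)
  also have "\<dots> = (\<Sum>i<n. a i * (a i * m i)) * (\<Sum>i<n. 1 / m i)"
    by (intro arg_cong2[where f = "(*)"] sum.cong)
      (auto dest!: m_pos simp: power_mult_distrib power_divide power2_eq_square)
  also have "\<dots> \<le> (\<Sum>i<n. a i * (a i * m i)) * L"
  proof (intro mult_left_mono sum_nonneg)
    fix i assume "i \<in> {..<n}"
    thus "0 \<le> a i * (a i * m i)"
      using a m_pos by (simp add: less_imp_le)
  qed (fact inv_mix)
  finally have "(\<Sum>i<n. a i)\<^sup>2 \<le> (\<Sum>i<n. a i * (a i * m i)) * L" .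
  moreover have "0 < (\<Sum>i<n. a i)" using a n by (intro sum_pos) auto
  ultimately show ?thesis
    using L_pos by (simp add: L_def m_def field_simps)
qed

lemma doubly_stochastic_E_bound:
  assumes w: "doubly_stochastic n w" and k: "k \<le> n" and lam: "mono_on {..<n} lam"
  shows "(\<Sum>j<k. lam j) \<le> (\<Sum>i<k. \<Sum>j<n. w i j * lam j)"
proof -
  define c where "c j = (\<Sum>i<k. w i j) - (if j < k then 1 else 0)" for j
  define L where "L = lam (k - 1)"
  \<comment> \<open>\<open>c\<close> has total mass zero, is nonpositive below \<open>k\<close> and nonnegative from \<open>k\<close> on; as \<open>lam\<close>
    is sorted, every term \<open>c j * (lam j - L)\<close> is therefore nonnegative.\<close>
  have truncate: "(\<Sum>j<n. if j < k then x j else 0) = (\<Sum>j<k. x j)" for x :: "nat \<Rightarrow> real"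
  proof -
    have "(\<Sum>j<n. if j < k then x j else 0) = sum x ({..<n} \<inter> {j. j < k})"
      by (simp add: sum.inter_restrict)
    also have "{..<n} \<inter> {j. j < k} = {..<k}" using k by auto
    finally show ?thesis .
  qed
  have mix_swap: "(\<Sum>j<n. (\<Sum>i<k. w i j) * x j) = (\<Sum>i<k. \<Sum>j<n. w i j * x j)" for x
    unfolding sum_distrib_right by (rule sum.swap)
  have "(\<Sum>j<n. c j) = (\<Sum>i<k. \<Sum>j<n. w i j) - k"
    using mix_swap[of "\<lambda>_. 1"] truncate[of "\<lambda>_. 1"] by (simp add: c_def sum_subtractf)
  also have "\<dots> = 0" using w k by (simp add: doubly_stochastic_def)
  finally have c_sum: "(\<Sum>j<n. c j) = 0" .
  have "0 \<le> c j * (lam j - L)" if j: "j < n" for j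
  proof (cases "j < k")
    case True
    have "(\<Sum>i<k. w i j) \<le> (\<Sum>i<n. w i j)"
      using w j k by (intro sum_mono2) (auto simp: doubly_stochastic_def)
    hence "c j \<le> 0" using w j True by (simp add: c_def doubly_stochastic_def)
    moreover have "lam j \<le> L" unfolding L_def using True k by (intro mono_onD[OF lam]) auto
    ultimately show ?thesis by (simp add: mult_nonpos_nonpos)
  next
    case False
    have "0 \<le> c j" using w j k False by (auto simp: c_def doubly_stochastic_def intro!: sum_nonneg)
    moreover have "L \<le> lam j" unfolding L_def using False j by (intro mono_onD[OF lam]) auto
    ultimately show ?thesis by simp
  qed
  hence "0 \<le> (\<Sum>j<n. c j * (lam j - L))" by (intro sum_nonneg) simp
  also have "\<dots> = (\<Sum>j<n. c j * lam j) - (\<Sum>j<n. c j) * L"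
    by (simp add: right_diff_distrib sum_subtractf sum_distrib_right)
  also have "\<dots> = (\<Sum>j<n. (\<Sum>i<k. w i j) * lam j - (if j < k then lam j else 0))"
    unfolding c_sum by (simp add: c_def left_diff_distrib if_distrib[of "\<lambda>x. x * lam _"] cong: if_cong)
  also have "\<dots> = (\<Sum>i<k. \<Sum>j<n. w i j * lam j) - (\<Sum>j<k. lam j)"
    by (simp only: sum_subtractf mix_swap truncate)
  finally show ?thesis by simp
qed

definition orthonormal_family :: "nat \<Rightarrow> (nat \<Rightarrow> 'a::real_inner) \<Rightarrow> bool" where
  "orthonormal_family n u \<longleftrightarrow> (\<forall>i<n. \<forall>j<n. u i \<bullet> u j = (if i = j then 1 else 0))"

lemma orthonormal_family_normalize:
  fixes d :: "nat \<Rightarrow> 'a::real_inner"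
  assumes "\<And>i. i < n \<Longrightarrow> d i \<noteq> 0" and "\<And>i j. i < n \<Longrightarrow> j < n \<Longrightarrow> i \<noteq> j \<Longrightarrow> d i \<bullet> d j = 0"
  shows "orthonormal_family n (\<lambda>i. d i /\<^sub>R norm (d i))"
  unfolding orthonormal_family_def
proof (intro allI impI)
  fix i j assume "i < n" "j < n"
  thus "(d i /\<^sub>R norm (d i)) \<bullet> (d j /\<^sub>R norm (d j)) = (if i = j then 1 else 0)"
    using assms(1)[OF \<open>i < n\<close>] assms(2) by (auto simp: dot_square_norm power2_eq_square field_simps)
qed

lemma orthonormal_family_expansion:
  fixes u :: "nat \<Rightarrow> 'a::euclidean_space"
  assumes "orthonormal_family DIM('a) u"
  shows "x = (\<Sum>i<DIM('a). (x \<bullet> u i) *\<^sub>R u i)"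
proof -
  define y where "y = x - (\<Sum>i<DIM('a). (x \<bullet> u i) *\<^sub>R u i)"
  have y_orth: "y \<bullet> u j = 0" if "j < DIM('a)" for j
    using assms that by (simp add: y_def orthonormal_family_def inner_diff_left inner_sum_left
        if_distrib[of "\<lambda>c. _ * c"] cong: if_cong)
  have "inj_on u {..<DIM('a)}"
    using assms by (auto simp: inj_on_def orthonormal_family_def) (metis zero_neq_one)
  moreover have "pairwise orthogonal (u ` {..<DIM('a)})" "0 \<notin> u ` {..<DIM('a)}"
    using assms by (auto simp: pairwise_def orthogonal_def orthonormal_family_def)
      (metis inner_zero_left zero_neq_one)
  ultimately have "span (u ` {..<DIM('a)}) = UNIV"
    by (metis card_image card_lessThan pairwise_orthogonal_independent card_eq_dim subset_UNIV dim_UNIV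
        finite_imageI finite_lessThan subset_antisym)
  hence "orthogonal y y"
    using y_orth by (intro orthogonal_to_span[of y]) (auto simp: orthogonal_def inner_commute)
  thus ?thesis by (simp add: y_def orthogonal_def)
qed

lemma orthonormal_family_parseval:
  fixes u :: "nat \<Rightarrow> 'a::euclidean_space"
  assumes "orthonormal_family DIM('a) u"
  shows "x \<bullet> y = (\<Sum>i<DIM('a). (x \<bullet> u i) * (y \<bullet> u i))"
proof -
  have "x \<bullet> y = (\<Sum>i<DIM('a). (x \<bullet> u i) *\<^sub>R u i) \<bullet> y"
    using orthonormal_family_expansion[OF assms, of x] by (rule arg_cong)
  also have "\<dots> = (\<Sum>i<DIM('a). (x \<bullet> u i) * (u i \<bullet> y))"
    by (simp add: inner_sum_left)
  finally show ?thesis by (simp add: inner_commute)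
qed

lemma doubly_stochastic_inner_squares:
  fixes u v :: "nat \<Rightarrow> 'a::euclidean_space"
  assumes u: "orthonormal_family DIM('a) u" and v: "orthonormal_family DIM('a) v"
  shows "doubly_stochastic DIM('a) (\<lambda>i j. (v i \<bullet> u j)\<^sup>2)"
proof -
  have sum_squares: "(\<Sum>j<DIM('a). (x \<bullet> w j)\<^sup>2) = x \<bullet> x"
    if "orthonormal_family DIM('a) w" for w :: "nat \<Rightarrow> 'a" and x
    using orthonormal_family_parseval[OF that, of x x] by (simp add: power2_eq_square)
  show ?thesis
    unfolding doubly_stochastic_def
  proof (intro conjI allI impI)
    fix i assume "i < DIM('a)"
    thus "(\<Sum>j<DIM('a). (v i \<bullet> u j)\<^sup>2) = 1"
      using sum_squares[OF u, of "v i"] v by (simp add: orthonormal_family_def)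
  next
    fix j assume "j < DIM('a)"
    have "(\<Sum>i<DIM('a). (v i \<bullet> u j)\<^sup>2) = (\<Sum>i<DIM('a). (u j \<bullet> v i)\<^sup>2)"
      by (simp add: inner_commute)
    also have "\<dots> = 1"
      using sum_squares[OF v, of "u j"] u \<open>j < DIM('a)\<close> by (simp add: orthonormal_family_def)
    finally show "(\<Sum>i<DIM('a). (v i \<bullet> u j)\<^sup>2) = 1" .
  qed simp
qed

section \<open>Spectral theorem for real symmetric matrices\<close>

definition eigenbasis :: "real^'n^'n \<Rightarrow> (nat \<Rightarrow> real) \<Rightarrow> (nat \<Rightarrow> real^'n) \<Rightarrow> bool" where
  "eigenbasis A lam u \<longleftrightarrow>
     orthonormal_family CARD('n) u \<and> (\<forall>i<CARD('n). A *v u i = lam i *\<^sub>R u i)"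

lemma symmetric_matrix_inner:
  fixes A :: "real^'n^'n"
  assumes "transpose A = A"
  shows "x \<bullet> (A *v y) = (A *v x) \<bullet> y"
proof -
  have "(A *v x) \<bullet> y = (transpose A *v x) \<bullet> y" by (simp add: assms)
  also have "\<dots> = x \<bullet> (A *v y)" by (simp add: dot_lmul_matrix)
  finally show ?thesis ..
qed

lemma quadratic_nonneg_imp_linear_coeff_zero:
  fixes R c :: real
  assumes "\<And>t. 0 \<le> 2 * t * R + t\<^sup>2 * c"
  shows "R = 0"
proof -
  define s where "s = \<bar>c\<bar> + 1"
  have s: "s > 0" by (simp add: s_def)
  have "0 \<le> (2 * (- R / s) * R + (- R / s)\<^sup>2 * c) * s\<^sup>2"
    using assms[of "- R / s"] s by simp
  also have "\<dots> = R\<^sup>2 * (c - 2 * s)"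
    using s by (simp add: field_simps power2_eq_square)
  finally have "0 \<le> R\<^sup>2 * (c - 2 * s)" .
  moreover have "c - 2 * s < 0" by (simp add: s_def)
  ultimately have "R\<^sup>2 \<le> 0" by (smt (verit) mult_pos_neg zero_less_power2)
  thus ?thesis by simp
qed

lemma rayleigh_minimizer_exists:
  fixes A :: "real^'n^'n"
  assumes S: "subspace S" and x: "x \<in> S" "x \<noteq> 0"
  obtains u where "u \<in> S" "norm u = 1"
    "\<And>y. y \<in> S \<Longrightarrow> (u \<bullet> (A *v u)) * (norm y)\<^sup>2 \<le> y \<bullet> (A *v y)"
proof -
  define K where "K = S \<inter> sphere 0 1"
  have normalized: "y /\<^sub>R norm y \<in> K" if "y \<in> S" "y \<noteq> 0" for y
    using subspace_scale[OF S that(1)] that(2) by (simp add: K_def)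
  have "compact K"
    unfolding K_def using closed_subspace[OF S] by (intro closed_Int_compact compact_sphere)
  moreover have "K \<noteq> {}" using normalized[OF x] by blast
  moreover have "continuous_on K (\<lambda>x. x \<bullet> (A *v x))"
    by (intro continuous_intros)
  ultimately obtain u where u: "u \<in> K" and u_min: "\<And>y. y \<in> K \<Longrightarrow> u \<bullet> (A *v u) \<le> y \<bullet> (A *v y)"
    by (metis continuous_attains_inf)
  show ?thesis
  proof (rule that)
    show "u \<in> S" "norm u = 1" using u by (simp_all add: K_def)
  next
    fix y assume y: "y \<in> S"
    show "(u \<bullet> (A *v u)) * (norm y)\<^sup>2 \<le> y \<bullet> (A *v y)"
    proof (cases "y = 0")
      case False
      have "u \<bullet> (A *v u) \<le> (y /\<^sub>R norm y) \<bullet> (A *v (y /\<^sub>R norm y))"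
        using normalized[OF y False] by (rule u_min)
      also have "\<dots> = (y \<bullet> (A *v y)) / (norm y)\<^sup>2"
        by (simp add: matrix_vector_mult_scaleR power2_eq_square divide_inverse)
      finally show ?thesis using False by (simp add: field_simps)
    qed simp
  qed
qed

lemma rayleigh_minimizer_is_eigenvector:
  fixes A :: "real^'n^'n"
  assumes sym: "transpose A = A" and S: "subspace S" and S_inv: "\<And>x. x \<in> S \<Longrightarrow> A *v x \<in> S"
    and u: "u \<in> S" "norm u = 1"
    and u_min: "\<And>y. y \<in> S \<Longrightarrow> (u \<bullet> (A *v u)) * (norm y)\<^sup>2 \<le> y \<bullet> (A *v y)"
  shows "A *v u = (u \<bullet> (A *v u)) *\<^sub>R u"
proof -
  define lam where "lam = u \<bullet> (A *v u)"
  define r where "r = A *v u - lam *\<^sub>R u"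
  have uu: "u \<bullet> u = 1" using u by (simp add: dot_square_norm)
  have r: "r \<in> S" unfolding r_def using S S_inv u by (intro subspace_diff subspace_scale) auto
  have ru: "r \<bullet> u = 0"
    unfolding r_def inner_diff_left inner_scaleR_left uu by (simp add: lam_def inner_commute)
  have rAu: "r \<bullet> (A *v u) = (norm r)\<^sup>2"
  proof -
    have "A *v u = r + lam *\<^sub>R u" by (simp add: r_def)
    hence "r \<bullet> (A *v u) = r \<bullet> r + lam * (r \<bullet> u)" by (simp add: inner_add_right)
    thus ?thesis using ru by (simp add: dot_square_norm)
  qed
  \<comment> \<open>Along the line \<open>u + t r\<close> in \<open>S\<close>, minimality forces the linear coefficient \<open>\<parallel>r\<parallel>\<^sup>2\<close> to vanish.\<close>
  have "0 \<le> 2 * t * (norm r)\<^sup>2 + t\<^sup>2 * (r \<bullet> (A *v r) - lam * (norm r)\<^sup>2)" for t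
  proof -
    have "(norm (u + t *\<^sub>R r))\<^sup>2 = (u + t *\<^sub>R r) \<bullet> (u + t *\<^sub>R r)"
      by (simp add: dot_square_norm)
    also have "\<dots> = u \<bullet> u + 2 * t * (r \<bullet> u) + t\<^sup>2 * (r \<bullet> r)"
      by (simp add: inner_add_left inner_add_right inner_commute power2_eq_square algebra_simps)
    finally have norm_line: "(norm (u + t *\<^sub>R r))\<^sup>2 = 1 + t\<^sup>2 * (norm r)\<^sup>2"
      by (simp add: uu ru dot_square_norm u)
    have uAr: "u \<bullet> (A *v r) = r \<bullet> (A *v u)"
      by (metis symmetric_matrix_inner[OF sym] inner_commute)
    have "(u + t *\<^sub>R r) \<bullet> (A *v (u + t *\<^sub>R r))
        = u \<bullet> (A *v u) + t * (u \<bullet> (A *v r)) + t * (r \<bullet> (A *v u)) + t * t * (r \<bullet> (A *v r))"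
      by (simp add: matrix_vector_right_distrib matrix_vector_mult_scaleR inner_add_left
          inner_add_right distrib_left)
    hence form_line: "(u + t *\<^sub>R r) \<bullet> (A *v (u + t *\<^sub>R r)) = lam + 2 * t * (norm r)\<^sup>2 + t\<^sup>2 * (r \<bullet> (A *v r))"
      unfolding uAr rAu lam_def[symmetric] by (simp add: power2_eq_square)
    have "u + t *\<^sub>R r \<in> S" using S u r by (intro subspace_add subspace_scale) auto
    thus ?thesis
      using u_min[of "u + t *\<^sub>R r"] unfolding norm_line form_line lam_def[symmetric]
      by (simp add: algebra_simps)
  qed
  hence "(norm r)\<^sup>2 = 0" by (rule quadratic_nonneg_imp_linear_coeff_zero)
  thus ?thesis by (simp add: r_def lam_def)
qed

lemma rayleigh_eigenvectors_exist:
  fixes A :: "real^'n^'n"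
  assumes sym: "transpose A = A" and n: "n \<le> CARD('n)"
  shows "\<exists>lam u. orthonormal_family n u \<and> (\<forall>i<n. A *v u i = lam i *\<^sub>R u i) \<and>
     (\<forall>i<n. \<forall>x. (\<forall>j<i. x \<bullet> u j = 0) \<longrightarrow> lam i * (norm x)\<^sup>2 \<le> x \<bullet> (A *v x))"
  using n
proof (induction n)
  case 0
  show ?case by (simp add: orthonormal_family_def)
next
  case (Suc n)
  then obtain lam u where u: "orthonormal_family n u" and eig: "\<forall>i<n. A *v u i = lam i *\<^sub>R u i"
    and min: "\<forall>i<n. \<forall>x. (\<forall>j<i. x \<bullet> u j = 0) \<longrightarrow> lam i * (norm x)\<^sup>2 \<le> x \<bullet> (A *v x)"
    by auto
  define S where "S = {x. \<forall>j<n. x \<bullet> u j = 0}"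
  have S: "subspace S"
    unfolding S_def subspace_def by (simp add: inner_add_left)
  have S_inv: "A *v x \<in> S" if "x \<in> S" for x
    using that eig by (simp add: S_def symmetric_matrix_inner[OF sym, symmetric])
  have "dim (u ` {..<n}) < DIM(real^'n)"
    using dim_le_card[OF span_superset, of "u ` {..<n}"] card_image_le[of "{..<n}" u] Suc.prems
    by simp
  then obtain x where x: "x \<noteq> 0" "\<And>y. y \<in> span (u ` {..<n}) \<Longrightarrow> orthogonal x y"
    using orthogonal_to_subspace_exists by blast
  have "x \<in> S"
    using x(2) by (auto simp: S_def orthogonal_def intro: span_base)
  then obtain v where v: "v \<in> S" "norm v = 1"
    and v_min: "\<And>y. y \<in> S \<Longrightarrow> (v \<bullet> (A *v v)) * (norm y)\<^sup>2 \<le> y \<bullet> (A *v y)"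
    using rayleigh_minimizer_exists[OF S _ x(1)] by blast
  have v_eig: "A *v v = (v \<bullet> (A *v v)) *\<^sub>R v"
    by (rule rayleigh_minimizer_is_eigenvector[OF sym S S_inv v v_min])
  show ?case
  proof (intro exI conjI allI impI)
    show "orthonormal_family (Suc n) (u(n := v))"
      using u v by (auto simp: orthonormal_family_def S_def less_Suc_eq inner_commute dot_square_norm)
    show "A *v (u(n := v)) i = (lam(n := v \<bullet> (A *v v))) i *\<^sub>R (u(n := v)) i" if "i < Suc n" for i
      using that eig v_eig by (auto simp: less_Suc_eq)
    show "(lam(n := v \<bullet> (A *v v))) i * (norm y)\<^sup>2 \<le> y \<bullet> (A *v y)"
      if "i < Suc n" "\<forall>j<i. y \<bullet> (u(n := v)) j = 0" for i y
      using that min v_min by (auto simp: less_Suc_eq S_def)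
  qed
qed

lemma symmetric_matrix_sorted_eigenbasis:
  fixes A :: "real^'n^'n"
  assumes sym: "transpose A = A"
  obtains lam u where "eigenbasis A lam u" "mono_on {..<CARD('n)} lam"
proof -
  obtain lam u where u: "orthonormal_family CARD('n) u" and eig: "\<forall>i<CARD('n). A *v u i = lam i *\<^sub>R u i"
    and min: "\<forall>i<CARD('n). \<forall>x. (\<forall>j<i. x \<bullet> u j = 0) \<longrightarrow> lam i * (norm x)\<^sup>2 \<le> x \<bullet> (A *v x)"
    using rayleigh_eigenvectors_exist[OF sym order.refl] by blast
  \<comment> \<open>\<open>u k\<close> is admissible in the Rayleigh minimisation that produced \<open>lam i\<close> for every \<open>i \<le> k\<close>.\<close>
  have "lam i \<le> lam k" if "i \<le> k" "k < CARD('n)" for i k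
  proof -
    have "\<forall>j<i. u k \<bullet> u j = 0" "u k \<bullet> u k = 1"
      using u that by (auto simp: orthonormal_family_def)
    hence "lam i * (norm (u k))\<^sup>2 \<le> u k \<bullet> (A *v u k)"
      using min that by simp
    thus ?thesis using eig that \<open>u k \<bullet> u k = 1\<close> by (simp add: dot_square_norm)
  qed
  hence "mono_on {..<CARD('n)} lam" by (intro mono_onI) auto
  with u eig show ?thesis by (intro that) (auto simp: eigenbasis_def)
qed

lemma eigenbasis_orthonormal:
  fixes A :: "real^'n^'n"
  shows "eigenbasis A lam u \<Longrightarrow> orthonormal_family DIM(real^'n) u"
  by (simp add: eigenbasis_def)

lemma eigenbasis_quadratic_form:
  fixes A :: "real^'n^'n"
  assumes sym: "transpose A = A" and u: "eigenbasis A lam u"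
  shows "x \<bullet> (A *v x) = (\<Sum>j<CARD('n). lam j * (x \<bullet> u j)\<^sup>2)"
proof -
  have "x \<bullet> (A *v x) = (\<Sum>j<CARD('n). (x \<bullet> u j) * ((A *v x) \<bullet> u j))"
    using orthonormal_family_parseval[OF eigenbasis_orthonormal[OF u], of x "A *v x"] by simp
  also have "\<dots> = (\<Sum>j<CARD('n). lam j * (x \<bullet> u j)\<^sup>2)"
  proof (rule sum.cong)
    fix j assume "j \<in> {..<CARD('n)}"
    hence "(A *v x) \<bullet> u j = lam j * (x \<bullet> u j)"
      using u symmetric_matrix_inner[OF sym, of x "u j"] by (simp add: eigenbasis_def inner_commute)
    thus "(x \<bullet> u j) * ((A *v x) \<bullet> u j) = lam j * (x \<bullet> u j)\<^sup>2"
      by (simp add: power2_eq_square)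
  qed simp
  finally show ?thesis .
qed

lemma det_eigenbasis:
  fixes A :: "real^'n^'n"
  assumes "eigenbasis A lam u"
  shows "det A = (\<Prod>i<CARD('n). lam i)"
proof -
  obtain h :: "'n \<Rightarrow> nat" where h: "bij_betw h UNIV {..<CARD('n)}"
    using ex_bij_betw_finite_nat[of "UNIV :: 'n set"] by (auto simp: atLeast0LessThan)
  have h_lt: "h r < CARD('n)" for r using h by (auto simp: bij_betw_def)
  have h_eq: "h r = h s \<longleftrightarrow> r = s" for r s using h by (auto simp: bij_betw_def inj_on_def)
  have uu: "u i \<bullet> u j = (if i = j then 1 else 0)" if "i < CARD('n)" "j < CARD('n)" for i j
    using assms that by (simp add: eigenbasis_def orthonormal_family_def)
  define U :: "real^'n^'n" where "U = (\<chi> r. u (h r))"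
  define D :: "real^'n^'n" where "D = (\<chi> r s. if r = s then lam (h r) else 0)"
  \<comment> \<open>The rows of \<open>U\<close> are the eigenvectors, so \<open>U\<close> is orthogonal and \<open>transpose U\<close> diagonalises \<open>A\<close>.\<close>
  have "U ** transpose U = mat 1"
    using uu[OF h_lt h_lt] h_eq
    by (simp add: vec_eq_iff matrix_matrix_mult_def transpose_def U_def inner_vec_def mat_def)
  hence "det (transpose U) \<noteq> 0" by (metis det_mul det_I mult_zero_right zero_neq_one)
  moreover have "A ** transpose U = transpose U ** D"
  proof -
    have "(A ** transpose U) $ r $ s = (transpose U ** D) $ r $ s" for r s
    proof -
      have "(A ** transpose U) $ r $ s = (A *v u (h s)) $ r"
        by (simp add: matrix_matrix_mult_def transpose_def U_def matrix_vector_mult_def)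
      also have "\<dots> = lam (h s) * u (h s) $ r"
        using assms h_lt by (simp add: eigenbasis_def)
      also have "\<dots> = (transpose U ** D) $ r $ s"
        by (simp add: matrix_matrix_mult_def transpose_def U_def D_def if_distrib cong: if_cong)
      finally show ?thesis .
    qed
    thus ?thesis by (simp add: vec_eq_iff)
  qed
  hence "det A * det (transpose U) = det (transpose U) * det D" by (metis det_mul)
  ultimately have "det A = det D" by simp
  also have "\<dots> = (\<Prod>r\<in>UNIV. lam (h r))" by (subst det_diagonal) (auto simp: D_def)
  also have "\<dots> = (\<Prod>i<CARD('n). lam i)" using prod.reindex_bij_betw[OF h, of lam] by simp
  finally show ?thesis .
qed

lemma poly_det: "poly (det M) t = det (\<chi> i j. poly (M $ i $ j) t)"
  by (simp add: det_def poly_sum poly_prod)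

lemma charpoly_eigenbasis:
  fixes A :: "real^'n^'n"
  assumes u: "eigenbasis A lam u"
  shows "charpoly A = (\<Prod>i<CARD('n). [:- lam i, 1:])"
proof -
  have "poly (charpoly A) t = poly (\<Prod>i<CARD('n). [:- lam i, 1:]) t" for t
  proof -
    define B :: "real^'n^'n" where "B = (\<chi> i j. (if i = j then t else 0) - A $ i $ j)"
    have "B *v x = t *\<^sub>R x - A *v x" for x
      by (simp add: vec_eq_iff B_def matrix_vector_mult_def sum_subtractf if_distrib[of "\<lambda>c. c * _"]
          left_diff_distrib cong: if_cong)
    hence "eigenbasis B (\<lambda>i. t - lam i) u"
      using u by (auto simp: eigenbasis_def scaleR_diff_left)
    hence "det B = (\<Prod>i<CARD('n). t - lam i)" by (rule det_eigenbasis)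
    moreover have "poly (charpoly A) t = det B"
      unfolding charpoly_def poly_det B_def by (rule arg_cong[where f = det]) (auto simp: vec_eq_iff)
    ultimately show ?thesis by (simp add: poly_prod)
  qed
  thus ?thesis using poly_eq_poly_eq_iff by blast
qed

lemma eigenvalues_sorted_eigenbasis:
  fixes A :: "real^'n^'n"
  assumes "eigenbasis A lam u" and "mono_on {..<CARD('n)} lam"
  shows "eigenvalues_sorted A = map lam [0..<CARD('n)]"
proof -
  have "proots (charpoly A) = (\<Sum>i<CARD('n). proots [:- lam i, 1:])"
    unfolding charpoly_eigenbasis[OF assms(1)] by (rule proots_prod) simp
  also have "\<dots> = mset (map lam [0..<CARD('n)])"
  proof -
    have "(\<Sum>i<m. {#lam i#}) = mset (map lam [0..<m])" for m
      by (induction m) simp_all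
    thus ?thesis by simp
  qed
  finally have roots: "proots (charpoly A) = mset (map lam [0..<CARD('n)])" .
  have "eigenvalues_sorted A = sorted_list_of_multiset (mset (map lam [0..<CARD('n)]))"
    by (simp only: eigenvalues_sorted_def roots)
  also have "\<dots> = sort (map lam [0..<CARD('n)])"
    by (rule sorted_list_of_multiset_mset)
  also have "\<dots> = map lam [0..<CARD('n)]"
    by (intro sorted_sort_id) (auto simp: sorted_iff_nth_mono intro!: mono_onD[OF assms(2)])
  finally show ?thesis .
qed

lemma eigenbasis_eigenvalue_pos:
  fixes A :: "real^'n^'n"
  assumes u: "eigenbasis A lam u" and inv: "invertible A" and psd: "\<And>x. 0 \<le> x \<bullet> (A *v x)"
    and i: "i < CARD('n)"
  shows "0 < lam i"
proof -
  have Au: "A *v u i = lam i *\<^sub>R u i" and uu: "u i \<bullet> u i = 1"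
    using u i by (simp_all add: eigenbasis_def orthonormal_family_def)
  have "0 \<le> lam i" using psd[of "u i"] by (simp add: Au uu)
  moreover have "lam i \<noteq> 0"
  proof
    assume "lam i = 0"
    obtain B where "B ** A = mat 1" using inv by (auto simp: invertible_def)
    hence "u i = B *v (A *v u i)" by (simp add: matrix_vector_mul_assoc)
    with \<open>lam i = 0\<close> have "u i = 0" by (simp add: Au)
    with uu show False by simp
  qed
  ultimately show ?thesis by simp
qed

lemma trace_matrix_inv_eigenbasis:
  fixes A :: "real^'n^'n"
  assumes sym: "transpose A = A" and u: "eigenbasis A lam u" and inv: "invertible A"
    and pos: "\<And>i. i < CARD('n) \<Longrightarrow> 0 < lam i"
  shows "trace (matrix_inv A) = (\<Sum>i<CARD('n). 1 / lam i)"
proof -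
  define B where "B = matrix_inv A"
  have "A ** B = mat 1"
    using inv unfolding invertible_def B_def matrix_inv_def by (rule someI2_ex) simp
  hence AB: "A *v (B *v x) = x" for x by (simp add: matrix_vector_mul_assoc)
  have Bu: "(B *v x) \<bullet> u i = (x \<bullet> u i) / lam i" if i: "i < CARD('n)" for x i
  proof -
    have "lam i * ((B *v x) \<bullet> u i) = (B *v x) \<bullet> (A *v u i)"
      using u i by (simp add: eigenbasis_def)
    also have "\<dots> = x \<bullet> u i" by (simp add: symmetric_matrix_inner[OF sym] AB)
    finally show ?thesis using pos[OF i] by (simp add: field_simps)
  qed
  have diag: "B $ r $ r = (\<Sum>i<CARD('n). (u i $ r)\<^sup>2 / lam i)" for r
  proof -
    have "(B *v axis r 1) $ r = B $ r $ r"
      by (simp add: matrix_vector_mult_def axis_def if_distrib[of "\<lambda>z. B $ r $ _ * z"] cong: if_cong)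
    hence "B $ r $ r = axis r 1 \<bullet> (B *v axis r 1)"
      by (simp add: inner_axis')
    also have "\<dots> = (\<Sum>i<CARD('n). (axis r 1 \<bullet> u i) * ((B *v axis r 1) \<bullet> u i))"
      using orthonormal_family_parseval[OF eigenbasis_orthonormal[OF u], of "axis r 1" "B *v axis r 1"] by simp
    also have "\<dots> = (\<Sum>i<CARD('n). (u i $ r)\<^sup>2 / lam i)"
      by (intro sum.cong refl) (simp add: Bu inner_axis' power2_eq_square)
    finally show ?thesis .
  qed
  have "trace B = (\<Sum>r\<in>UNIV. \<Sum>i<CARD('n). (u i $ r)\<^sup>2 / lam i)"
    by (simp add: trace_def diag)
  also have "\<dots> = (\<Sum>i<CARD('n). (\<Sum>r\<in>UNIV. (u i $ r)\<^sup>2) / lam i)"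
    by (subst sum.swap) (simp add: sum_divide_distrib)
  also have "\<dots> = (\<Sum>i<CARD('n). 1 / lam i)"
    using u by (intro sum.cong refl)
      (simp add: eigenbasis_def orthonormal_family_def inner_vec_def power2_eq_square)
  finally show ?thesis by (simp add: B_def)
qed

lemma info_matrix_entry: "info_matrix f \<xi> $ i $ j = (\<Sum>z\<in>UNIV. \<xi> z * (f z $ i * f z $ j))"
  by (simp add: info_matrix_def outer_def sum_component)

lemma info_matrix_bilinear:
  "x \<bullet> (info_matrix f \<xi> *v y) = (\<Sum>z\<in>UNIV. \<xi> z * ((f z \<bullet> x) * (f z \<bullet> y)))"
proof -
  have "x \<bullet> (info_matrix f \<xi> *v y)
      = (\<Sum>i\<in>UNIV. \<Sum>j\<in>UNIV. \<Sum>z\<in>UNIV. \<xi> z * ((f z $ i * x $ i) * (f z $ j * y $ j)))"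
    by (simp add: inner_vec_def matrix_vector_mult_def info_matrix_entry sum_distrib_left
        sum_distrib_right mult_ac)
  also have "\<dots> = (\<Sum>i\<in>UNIV. \<Sum>z\<in>UNIV. \<Sum>j\<in>UNIV. \<xi> z * ((f z $ i * x $ i) * (f z $ j * y $ j)))"
    by (intro sum.cong refl) (rule sum.swap)
  also have "\<dots> = (\<Sum>z\<in>UNIV. \<Sum>i\<in>UNIV. \<Sum>j\<in>UNIV. \<xi> z * ((f z $ i * x $ i) * (f z $ j * y $ j)))"
    by (rule sum.swap)
  also have "\<dots> = (\<Sum>z\<in>UNIV. \<xi> z * ((\<Sum>i\<in>UNIV. f z $ i * x $ i) * (\<Sum>j\<in>UNIV. f z $ j * y $ j)))"
    unfolding sum_product by (simp only: sum_distrib_left)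
  also have "\<dots> = (\<Sum>z\<in>UNIV. \<xi> z * ((f z \<bullet> x) * (f z \<bullet> y)))"
    by (simp add: inner_vec_def)
  finally show ?thesis .
qed

lemma info_matrix_transpose: "transpose (info_matrix f \<xi>) = info_matrix f \<xi>"
  by (simp add: vec_eq_iff transpose_def info_matrix_entry mult.commute)

lemma info_matrix_psd: "design \<xi> \<Longrightarrow> 0 \<le> x \<bullet> (info_matrix f \<xi> *v x)"
  by (simp add: info_matrix_bilinear design_def sum_nonneg)

lemma xi_dist2_lin_model:
  "xi_dist2 (lin_model f) \<xi> t th0 = (t - th0) \<bullet> (info_matrix f \<xi> *v (t - th0))"
  by (simp add: xi_dist2_def lin_model_def info_matrix_bilinear inner_diff_right power2_eq_square mult_ac)

lemma V_set_mix_representation: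
  fixes f :: "'x::finite \<Rightarrow> real^'p"
  assumes u: "eigenbasis (info_matrix f \<xi>) lam u" and ts: "ts \<in> V_set th0"
  obtains w where "doubly_stochastic CARD('p) w"
    and "\<And>i. i < CARD('p) \<Longrightarrow> 0 < (norm (ts!i - th0))\<^sup>2"
    and "\<And>i. i < CARD('p) \<Longrightarrow>
       xi_dist2 (lin_model f) \<xi> (ts!i) th0 = (norm (ts!i - th0))\<^sup>2 * (\<Sum>j<CARD('p). w i j * lam j)"
proof -
  define d where "d i = ts!i - th0" for i
  define v where "v i = d i /\<^sub>R norm (d i)" for i
  have d0: "d i \<noteq> 0" if "i < CARD('p)" for i
    using ts that by (simp add: V_set_def d_def)
  have "orthonormal_family CARD('p) v"
    unfolding v_def using ts by (intro orthonormal_family_normalize) (auto simp: V_set_def d_def)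
  hence "doubly_stochastic CARD('p) (\<lambda>i j. (v i \<bullet> u j)\<^sup>2)"
    using doubly_stochastic_inner_squares[OF eigenbasis_orthonormal[OF u], of v] by simp
  moreover have "0 < (norm (ts!i - th0))\<^sup>2" if "i < CARD('p)" for i
    using d0[OF that] by (simp add: d_def)
  moreover have "xi_dist2 (lin_model f) \<xi> (ts!i) th0
      = (norm (ts!i - th0))\<^sup>2 * (\<Sum>j<CARD('p). (v i \<bullet> u j)\<^sup>2 * lam j)" if i: "i < CARD('p)" for i
  proof -
    have "d i \<bullet> u j = norm (d i) * (v i \<bullet> u j)" for j
      using d0[OF i] by (simp add: v_def)
    hence "xi_dist2 (lin_model f) \<xi> (ts!i) th0 = (\<Sum>j<CARD('p). lam j * ((norm (d i))\<^sup>2 * (v i \<bullet> u j)\<^sup>2))"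
      by (simp add: xi_dist2_lin_model eigenbasis_quadratic_form[OF info_matrix_transpose u]
          d_def[symmetric] power_mult_distrib)
    thus ?thesis by (simp add: sum_distrib_left d_def mult_ac)
  qed
  ultimately show ?thesis by (rule that)
qed

lemma scaled_eigenvector_tuple:
  fixes f :: "'x::finite \<Rightarrow> real^'p" and th0 :: "real^'p"
  assumes u: "eigenbasis (info_matrix f \<xi>) lam u" and c: "\<forall>i<CARD('p). c i \<noteq> 0"
  defines "ts \<equiv> map (\<lambda>i. th0 + c i *\<^sub>R u i) [0..<CARD('p)]"
  shows "ts \<in> V_set th0"
    and "\<And>i. i < CARD('p) \<Longrightarrow> (norm (ts!i - th0))\<^sup>2 = (c i)\<^sup>2"
    and "\<And>i. i < CARD('p) \<Longrightarrow> xi_dist2 (lin_model f) \<xi> (ts!i) th0 = (c i)\<^sup>2 * lam i"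
proof -
  have uu: "u i \<bullet> u j = (if i = j then 1 else 0)" if "i < CARD('p)" "j < CARD('p)" for i j
    using u that by (simp add: eigenbasis_def orthonormal_family_def)
  have eig: "info_matrix f \<xi> *v u i = lam i *\<^sub>R u i" if "i < CARD('p)" for i
    using u that by (simp add: eigenbasis_def)
  show "ts \<in> V_set th0"
    unfolding V_set_def
  proof (intro CollectI conjI allI impI)
    fix i assume i: "i < CARD('p)"
    show "ts!i - th0 \<noteq> 0" using c i uu[OF i i] by (auto simp: ts_def)
    fix j assume "j < CARD('p)" "i \<noteq> j"
    thus "(ts!i - th0) \<bullet> (ts!j - th0) = 0" using uu i by (simp add: ts_def)
  qed (simp add: ts_def)
  show "(norm (ts!i - th0))\<^sup>2 = (c i)\<^sup>2" if "i < CARD('p)" for i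
    using uu[OF that that] that by (simp add: ts_def power_mult_distrib dot_square_norm[symmetric])
  show "xi_dist2 (lin_model f) \<xi> (ts!i) th0 = (c i)\<^sup>2 * lam i" if "i < CARD('p)" for i
    using uu[OF that that] that
    by (simp add: ts_def xi_dist2_lin_model matrix_vector_mult_scaleR eig power2_eq_square)
qed

section \<open>Extended criteria\<close>

lemma phi_E_sorted_eigenbasis:
  fixes f :: "'x::finite \<Rightarrow> real^'p"
  assumes "eigenbasis (info_matrix f \<xi>) lam u" "mono_on {..<CARD('p)} lam" and k: "k \<le> CARD('p)"
  shows "phi_E k f \<xi> = (\<Sum>j<k. lam j)"
proof -
  have "phi_E k f \<xi> = sum_list (take k (map lam [0..<CARD('p)]))"
    by (simp add: phi_E_def eigenvalues_sorted_eigenbasis[OF assms(1,2)])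
  also have "\<dots> = sum_list (map lam [0..<k])"
    using k by (simp add: take_map min_def)
  finally show ?thesis
    using sum_set_upt_conv_sum_list_nat[of lam 0 k] by (simp add: atLeast0LessThan)
qed

lemma Inf_image_attained:
  fixes g :: "'a \<Rightarrow> 'b::conditionally_complete_linorder"
  assumes "x \<in> S" and "\<And>y. y \<in> S \<Longrightarrow> g x \<le> g y"
  shows "Inf (g ` S) = g x"
  using assms by (intro cInf_eq_minimum) auto

lemma phi_eE_lin_model:
  fixes f :: "'x::finite \<Rightarrow> real^'p" and th0 :: "real^'p"
  assumes k: "k \<le> CARD('p)"
  shows "(\<exists>ts\<in>V_set th0. obj_eE k (lin_model f) \<xi> th0 ts = phi_eE k (lin_model f) \<xi> th0) \<and>
    phi_eE k (lin_model f) \<xi> th0 = phi_E k f \<xi>"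
proof -
  obtain lam u where u: "eigenbasis (info_matrix f \<xi>) lam u" and mono: "mono_on {..<CARD('p)} lam"
    using symmetric_matrix_sorted_eigenbasis[OF info_matrix_transpose] by blast
  define ts0 where "ts0 = map (\<lambda>i. th0 + u i) [0..<CARD('p)]"
  have ts0: "ts0 \<in> V_set th0" "\<And>i. i < CARD('p) \<Longrightarrow> (norm (ts0!i - th0))\<^sup>2 = 1"
    "\<And>i. i < CARD('p) \<Longrightarrow> xi_dist2 (lin_model f) \<xi> (ts0!i) th0 = lam i"
    using scaled_eigenvector_tuple[where c = "\<lambda>_. 1" and ?th0.0 = th0, OF u] by (simp_all add: ts0_def)
  have obj0: "obj_eE k (lin_model f) \<xi> th0 ts0 = (\<Sum>j<k. lam j)"
    unfolding obj_eE_def using k ts0(2,3) by (intro sum.cong) auto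
  have lower: "obj_eE k (lin_model f) \<xi> th0 ts0 \<le> obj_eE k (lin_model f) \<xi> th0 ts" if ts: "ts \<in> V_set th0" for ts
  proof -
    obtain w where w: "doubly_stochastic CARD('p) w"
      and pos: "\<And>i. i < CARD('p) \<Longrightarrow> 0 < (norm (ts!i - th0))\<^sup>2"
      and mix: "\<And>i. i < CARD('p) \<Longrightarrow>
         xi_dist2 (lin_model f) \<xi> (ts!i) th0 = (norm (ts!i - th0))\<^sup>2 * (\<Sum>j<CARD('p). w i j * lam j)"
      using V_set_mix_representation[OF u ts] by blast
    have "obj_eE k (lin_model f) \<xi> th0 ts = (\<Sum>i<k. \<Sum>j<CARD('p). w i j * lam j)"
      unfolding obj_eE_def using k pos mix by (intro sum.cong) (auto simp: less_le_trans)
    thus ?thesis using doubly_stochastic_E_bound[OF w k mono] obj0 by simp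
  qed
  have "phi_eE k (lin_model f) \<xi> th0 = obj_eE k (lin_model f) \<xi> th0 ts0"
    unfolding phi_eE_def using ts0(1) lower by (rule Inf_image_attained)
  with obj0 ts0(1) phi_E_sorted_eigenbasis[OF u mono k] show ?thesis by auto
qed

lemma design_plus_eigenvector_tuple:
  fixes f :: "'x::finite \<Rightarrow> real^'p" and th0 :: "real^'p"
  assumes "design_plus f \<xi>"
  obtains lam u ts0 where "eigenbasis (info_matrix f \<xi>) lam u" "\<And>i. i < CARD('p) \<Longrightarrow> 0 < lam i"
    and "ts0 \<in> V_set th0"
    and "\<And>i. i < CARD('p) \<Longrightarrow> (norm (ts0!i - th0))\<^sup>2 = 1 / lam i"
    and "\<And>i. i < CARD('p) \<Longrightarrow> xi_dist2 (lin_model f) \<xi> (ts0!i) th0 = 1"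
proof -
  obtain lam u where u: "eigenbasis (info_matrix f \<xi>) lam u"
    using symmetric_matrix_sorted_eigenbasis[OF info_matrix_transpose] by blast
  have pos: "0 < lam i" if "i < CARD('p)" for i
    using assms eigenbasis_eigenvalue_pos[OF u _ info_matrix_psd that] by (simp add: design_plus_def)
  define ts0 where "ts0 = map (\<lambda>i. th0 + (1 / sqrt (lam i)) *\<^sub>R u i) [0..<CARD('p)]"
  have "ts0 \<in> V_set th0" "\<And>i. i < CARD('p) \<Longrightarrow> (norm (ts0!i - th0))\<^sup>2 = 1 / lam i"
    "\<And>i. i < CARD('p) \<Longrightarrow> xi_dist2 (lin_model f) \<xi> (ts0!i) th0 = 1"
  proof -
    have c_nz: "\<forall>i<CARD('p). 1 / sqrt (lam i) \<noteq> 0" using pos by (auto simp: less_imp_neq[symmetric])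
    note tuple = scaled_eigenvector_tuple[where c = "\<lambda>i. 1 / sqrt (lam i)" and ?th0.0 = th0, OF u c_nz]
    show "ts0 \<in> V_set th0" using tuple(1) by (simp add: ts0_def)
    show "(norm (ts0!i - th0))\<^sup>2 = 1 / lam i" "xi_dist2 (lin_model f) \<xi> (ts0!i) th0 = 1"
      if "i < CARD('p)" for i
      using tuple(2,3)[OF that] pos[OF that] by (simp_all add: ts0_def power_divide)
  qed
  with u pos show ?thesis by (rule that)
qed

lemma phi_eD_lin_model:
  fixes f :: "'x::finite \<Rightarrow> real^'p" and th0 :: "real^'p"
  assumes "design_plus f \<xi>"
  shows "(\<exists>ts\<in>V_set th0. obj_eD (lin_model f) \<xi> th0 ts = phi_eD (lin_model f) \<xi> th0) \<and>
    phi_eD (lin_model f) \<xi> th0 = phi_D f \<xi>"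
proof -
  obtain lam u ts0 where u: "eigenbasis (info_matrix f \<xi>) lam u" and pos: "\<And>i. i < CARD('p) \<Longrightarrow> 0 < lam i"
    and ts0: "ts0 \<in> V_set th0" "\<And>i. i < CARD('p) \<Longrightarrow> (norm (ts0!i - th0))\<^sup>2 = 1 / lam i"
      "\<And>i. i < CARD('p) \<Longrightarrow> xi_dist2 (lin_model f) \<xi> (ts0!i) th0 = 1"
    using design_plus_eigenvector_tuple[OF assms] by metis
  have lam_prod_pos: "0 < (\<Prod>i<CARD('p). lam i)" using pos by (intro prod_pos) simp
  have obj0: "obj_eD (lin_model f) \<xi> th0 ts0 = (\<Prod>i<CARD('p). lam i) powr (1 / CARD('p))"
  proof -
    have "obj_eD (lin_model f) \<xi> th0 ts0 = 1 / (\<Prod>j<CARD('p). 1 / lam j) powr (1 / CARD('p))"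
      by (simp add: obj_eD_def ts0(2,3))
    thus ?thesis using lam_prod_pos by (simp add: prod_dividef powr_divide)
  qed
  have lower: "obj_eD (lin_model f) \<xi> th0 ts0 \<le> obj_eD (lin_model f) \<xi> th0 ts" if ts: "ts \<in> V_set th0" for ts
  proof -
    obtain w where w: "doubly_stochastic CARD('p) w"
      and a: "\<And>i. i < CARD('p) \<Longrightarrow> 0 < (norm (ts!i - th0))\<^sup>2"
      and mix: "\<And>i. i < CARD('p) \<Longrightarrow>
         xi_dist2 (lin_model f) \<xi> (ts!i) th0 = (norm (ts!i - th0))\<^sup>2 * (\<Sum>j<CARD('p). w i j * lam j)"
      using V_set_mix_representation[OF u ts] by blast
    have "obj_eD (lin_model f) \<xi> th0 ts0 \<le> ((1 / CARD('p)) *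
        (\<Sum>i<CARD('p). (norm (ts!i - th0))\<^sup>2 * (\<Sum>j<CARD('p). w i j * lam j))) /
        (\<Prod>i<CARD('p). (norm (ts!i - th0))\<^sup>2) powr (1 / CARD('p))"
      unfolding obj0 by (rule doubly_stochastic_D_bound[OF w _ a pos]) simp
    also have "\<dots> = obj_eD (lin_model f) \<xi> th0 ts"
      by (simp add: obj_eD_def mix)
    finally show ?thesis .
  qed
  have "phi_eD (lin_model f) \<xi> th0 = obj_eD (lin_model f) \<xi> th0 ts0"
    unfolding phi_eD_def using ts0(1) lower by (rule Inf_image_attained)
  moreover have "phi_D f \<xi> = (\<Prod>i<CARD('p). lam i) powr (1 / CARD('p))"
    by (simp add: phi_D_def det_eigenbasis[OF u])
  ultimately show ?thesis using obj0 ts0(1) by auto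
qed

lemma phi_eA_lin_model:
  fixes f :: "'x::finite \<Rightarrow> real^'p" and th0 :: "real^'p"
  assumes "design_plus f \<xi>"
  shows "(\<exists>ts\<in>V_set th0. obj_eA (lin_model f) \<xi> th0 ts = phi_eA (lin_model f) \<xi> th0) \<and>
    phi_eA (lin_model f) \<xi> th0 = phi_A f \<xi>"
proof -
  obtain lam u ts0 where u: "eigenbasis (info_matrix f \<xi>) lam u" and pos: "\<And>i. i < CARD('p) \<Longrightarrow> 0 < lam i"
    and ts0: "ts0 \<in> V_set th0" "\<And>i. i < CARD('p) \<Longrightarrow> (norm (ts0!i - th0))\<^sup>2 = 1 / lam i"
      "\<And>i. i < CARD('p) \<Longrightarrow> xi_dist2 (lin_model f) \<xi> (ts0!i) th0 = 1"
    using design_plus_eigenvector_tuple[OF assms] by metis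
  define L where "L = (\<Sum>j<CARD('p). 1 / lam j)"
  have "0 < L" unfolding L_def using pos by (intro sum_pos) (auto simp: lessThan_empty_iff)
  have "obj_eA (lin_model f) \<xi> th0 ts0 = L / L\<^sup>2"
    by (simp add: obj_eA_def ts0(2,3) L_def)
  with \<open>0 < L\<close> have obj0: "obj_eA (lin_model f) \<xi> th0 ts0 = 1 / L"
    by (simp add: power2_eq_square)
  have lower: "obj_eA (lin_model f) \<xi> th0 ts0 \<le> obj_eA (lin_model f) \<xi> th0 ts" if ts: "ts \<in> V_set th0" for ts
  proof -
    obtain w where w: "doubly_stochastic CARD('p) w"
      and a: "\<And>i. i < CARD('p) \<Longrightarrow> 0 < (norm (ts!i - th0))\<^sup>2"
      and mix: "\<And>i. i < CARD('p) \<Longrightarrow>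
         xi_dist2 (lin_model f) \<xi> (ts!i) th0 = (norm (ts!i - th0))\<^sup>2 * (\<Sum>j<CARD('p). w i j * lam j)"
      using V_set_mix_representation[OF u ts] by blast
    have "obj_eA (lin_model f) \<xi> th0 ts0 \<le>
        (\<Sum>i<CARD('p). (norm (ts!i - th0))\<^sup>2 * ((norm (ts!i - th0))\<^sup>2 * (\<Sum>j<CARD('p). w i j * lam j))) /
        (\<Sum>i<CARD('p). (norm (ts!i - th0))\<^sup>2)\<^sup>2"
      unfolding obj0 L_def by (rule doubly_stochastic_A_bound[OF w _ a pos]) simp
    also have "\<dots> = obj_eA (lin_model f) \<xi> th0 ts"
      by (simp add: obj_eA_def mix)
    finally show ?thesis .
  qed
  have "phi_eA (lin_model f) \<xi> th0 = obj_eA (lin_model f) \<xi> th0 ts0"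
    unfolding phi_eA_def using ts0(1) lower by (rule Inf_image_attained)
  moreover have "phi_A f \<xi> = 1 / L"
    using assms pos by (simp add: phi_A_def L_def design_plus_def
        trace_matrix_inv_eigenbasis[OF info_matrix_transpose u])
  ultimately show ?thesis using obj0 ts0(1) by auto
qed

theorem theorem2:
  fixes f :: "'x::finite \<Rightarrow> real^'p" and th0 :: "real^'p"
  shows
    "(\<forall>\<xi>. design_plus f \<xi> \<longrightarrow>
        (\<exists>ts\<in>V_set th0. obj_eD (lin_model f) \<xi> th0 ts = phi_eD (lin_model f) \<xi> th0) \<and>
        phi_eD (lin_model f) \<xi> th0 = phi_D f \<xi> \<and>
        (\<exists>ts\<in>V_set th0. obj_eA (lin_model f) \<xi> th0 ts = phi_eA (lin_model f) \<xi> th0) \<and>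
        phi_eA (lin_model f) \<xi> th0 = phi_A f \<xi>)
   \<and> (\<forall>\<xi>. design \<xi> \<longrightarrow> (\<forall>k\<in>{1..CARD('p)}.
        (\<exists>ts\<in>V_set th0. obj_eE k (lin_model f) \<xi> th0 ts = phi_eE k (lin_model f) \<xi> th0) \<and>
        phi_eE k (lin_model f) \<xi> th0 = phi_E k f \<xi>))"
  using phi_eD_lin_model phi_eA_lin_model phi_eE_lin_model by (meson atLeastAtMost_iff)

end
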